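(* Let $m\geq1$ and let $\{\Lambda_i\}_{i\geq1}$ be an infinite collection of proper lattices in $\mathbb{Z}^m$. Put $\mathcal{M}_\mathscr{B}=\bigcup_{i\geq1}\Lambda_i$, $\mathcal{F}_\mathscr{B}=\mathbb{Z}^m\setminus\mathcal{M}_\mathscr{B}$, $\eta=\mathbb{1}_{\mathcal{F}_\mathscr{B}}\in\{0,1\}^{\mathbb{Z}^m}$ and let $X_\eta$ be its orbit closure. Consider: (a) $(X_\eta,(S_{\mathbf{n}})_{\mathbf{n}\in\mathbb{Z}^m})$ is proximal; (b) $\mathbf{0}\in X_\eta$, where $\mathbf{0}_{\mathbf{n}}=0$ for all $\mathbf{n}$; (c) for any $k\geq1$ and any lattices $\widetilde\Lambda_1,\dots,\widetilde\Lambda_k$ in $\mathbb{Z}^m$ with $\bigcup_{j=1}^k\widetilde\Lambda_j\neq\mathbb{Z}^m$, we have $\mathcal{M}_\mathscr{B}\not\subseteq\bigcup_{j=1}^k\widetilde\Lambda_j$; (d) $\{\Lambda_i\}_{i\geq1}$ contains an infinite pairwise coprime subset; (e) for any $\mathbf{n}\in\mathbb{Z}^m$ and any lattice $\Lambda\subseteq\mathbb{Z}^m$, $\mathbf{n}+\Lambda\not\subseteq\mathcal{F}_\mathscr{B}$; (f) $d^*(\mathcal{M}_\mathscr{B})=1$. Then (d) implies (a), and (a), (b), (c), (e), (f) are pairwise equivalent.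
   Context: A lattice in $\mathbb{Z}^m$ is a subgroup of finite index. The shift is $(S_{\mathbf{n}}x)_{\mathbf{g}}=x_{\mathbf{g}+\mathbf{n}}$ on $\{0,1\}^{\mathbb{Z}^m}$ with the product topology; $X_\eta$ is the closure of the orbit of $\eta$. A system is proximal if every pair of its points $(x,y)$ satisfies $\liminf_{\mathbf{n}\to\infty}D(S_{\mathbf{n}}x,S_{\mathbf{n}}y)=0$ for a compatible metric $D$. Proper subgroups $\Lambda,\Lambda'$ are coprime if $\Lambda+\Lambda'=\mathbb{Z}^m$. Upper Banach density: $d^*(A)=\sup\{\limsup_n |A\cap F_n|/|F_n|\}$ over all Følner sequences $(F_n)$ in $\mathbb{Z}^m$ (finite sets with $|(F_n+g)\cap F_n|/|F_n|\to1$ for every $g$). *)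

theory Defs
  imports "HOL-Analysis.Analysis"
begin

text \<open>Z^m is modelled as int ^ 'm for a finite index type 'm (so m = CARD('m) \<ge> 1).
  Points of {0,1}^(Z^m) are functions (int ^ 'm) \<Rightarrow> int taking values in {0,1};
  the function space carries the product topology and the compatible metric from
  HOL-Analysis.Function_Metric.\<close>

definition is_lattice :: "(int ^ 'm::finite) set \<Rightarrow> bool" where
  "is_lattice L \<longleftrightarrow> 0 \<in> L \<and> (\<forall>x\<in>L. \<forall>y\<in>L. x - y \<in> L)
      \<and> finite (range (\<lambda>a. (\<lambda>y. a + y) ` L))"

definition proper_lattice :: "(int ^ 'm::finite) set \<Rightarrow> bool" where
  "proper_lattice L \<longleftrightarrow> is_lattice L \<and> L \<noteq> UNIV"

definition coprime_subgroups :: "(int ^ 'm::finite) set \<Rightarrow> (int ^ 'm) set \<Rightarrow> bool" where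
  "coprime_subgroups L L' \<longleftrightarrow> {x + y |x y. x \<in> L \<and> y \<in> L'} = UNIV"

definition shift :: "int ^ 'm::finite \<Rightarrow> (int ^ 'm \<Rightarrow> int) \<Rightarrow> (int ^ 'm \<Rightarrow> int)" where
  "shift n x = (\<lambda>g. x (g + n))"

definition orbit_closure :: "(int ^ 'm::finite \<Rightarrow> int) \<Rightarrow> (int ^ 'm \<Rightarrow> int) set" where
  "orbit_closure \<eta> = closure (range (\<lambda>n. shift n \<eta>))"

text \<open>Proximality: liminf over n \<rightarrow> \<infinity> (the cofinite filter on Z^m) of the distance is 0.\<close>
definition proximal :: "(int ^ 'm::finite \<Rightarrow> int) set \<Rightarrow> bool" where
  "proximal X \<longleftrightarrow> (\<forall>x\<in>X. \<forall>y\<in>X.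
      Liminf cofinite (\<lambda>n. ereal (dist (shift n x) (shift n y))) = 0)"

definition folner :: "(nat \<Rightarrow> (int ^ 'm::finite) set) \<Rightarrow> bool" where
  "folner F \<longleftrightarrow> (\<forall>n. finite (F n)) \<and>
     (\<forall>g. (\<lambda>n. real (card (((\<lambda>x. x + g) ` F n) \<inter> F n)) / real (card (F n))) \<longlonglongrightarrow> 1)"

definition upper_banach_density :: "(int ^ 'm::finite) set \<Rightarrow> ereal" where
  "upper_banach_density A = (SUP F \<in> {F. folner F}.
      limsup (\<lambda>n. ereal (real (card (A \<inter> F n)) / real (card (F n)))))"

end

theory Submission
  imports Defs "HOL-Real_Asymp.Real_Asymp"
begin

text \<open>
  Everything revolves around property (e): every coset \<open>n + L\<close> of every lattice \<open>L\<close> meets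
  \<open>M = \<Union>\<B>\<close>. Given (e), induction over a finite window \<open>V\<close> produces \<open>s\<close> and a sublattice
  \<open>L\<^sub>1\<close> with \<open>V + s + L\<^sub>1 \<subseteq> M\<close> (intersecting with the lattice hit at each step keeps a
  lattice), so \<open>\<eta>\<close> vanishes there and \<open>0 \<in> X\<^sub>\<eta>\<close>. An arbitrary \<open>x \<in> X\<^sub>\<eta>\<close> is, by pigeonhole over the
  finitely many cosets of \<open>L\<^sub>1\<close>, a limit of shifts of \<open>\<eta>\<close> along a single coset, hence vanishes on
  a whole coset of a sublattice as well; doing this for \<open>x\<close> and then, inside that sublattice, for
  \<open>y\<close> gives infinitely many shifts along which \<open>x\<close> and \<open>y\<close> agree on the window, i.e. proximality.

  Conversely, a coset \<open>n + L\<close> inside \<open>F\<close> makes \<open>\<eta>\<close> and its \<open>n\<close>-shift differ on every translate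
  of a finite window, and bounds the upper Banach density of \<open>M\<close> by \<open>1 - 1/(2 [\<int>\<^sup>m : L])\<close>;
  translated cubes inside \<open>M\<close> give density 1. The lattices \<open>L + \<Lambda>\<close> with \<open>\<Lambda> \<in> \<B>\<close> contain \<open>L\<close>,
  so there are finitely many of them: they cover \<open>M\<close> but miss \<open>n\<close>, contradicting (c), and an
  infinite pairwise coprime family contains \<open>\<Lambda> \<noteq> \<Lambda>'\<close> with \<open>L + \<Lambda> = L + \<Lambda>'\<close>, which puts a point
  of \<open>\<Lambda>\<close> into \<open>n + L\<close>.
\<close>

section \<open>Lattices in \<open>\<int>\<^sup>m\<close>\<close>

lemma is_lattice_zero: "is_lattice L \<Longrightarrow> 0 \<in> L"
  unfolding is_lattice_def by blast

lemma is_lattice_diff: "is_lattice L \<Longrightarrow> x \<in> L \<Longrightarrow> y \<in> L \<Longrightarrow> x - y \<in> L"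
  unfolding is_lattice_def by blast

lemma is_lattice_uminus: "is_lattice L \<Longrightarrow> x \<in> L \<Longrightarrow> - x \<in> L"
  using is_lattice_diff[of L 0 x] is_lattice_zero by fastforce

lemma is_lattice_add: "is_lattice L \<Longrightarrow> x \<in> L \<Longrightarrow> y \<in> L \<Longrightarrow> x + y \<in> L"
  using is_lattice_diff[of L x "- y"] is_lattice_uminus by fastforce

lemma finite_lattice_cosets: "is_lattice L \<Longrightarrow> finite (range (\<lambda>a. (+) a ` L))"
  unfolding is_lattice_def by blast

lemma is_lattice_UNIV: "is_lattice (UNIV :: (int ^ 'm::finite) set)"
proof -
  have "range (\<lambda>a. (+) a ` (UNIV :: (int ^ 'm) set)) = {UNIV}"
    by (auto simp: surj_def intro!: exI[of _ "_ - _"])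
  then show ?thesis
    unfolding is_lattice_def by auto
qed

lemma is_lattice_Int:
  assumes "is_lattice L" "is_lattice K"
  shows "is_lattice (L \<inter> K)"
proof -
  have "(+) a ` (L \<inter> K) = (+) a ` L \<inter> (+) a ` K" for a
    by auto
  then have "range (\<lambda>a. (+) a ` (L \<inter> K)) \<subseteq>
      (\<lambda>(A, B). A \<inter> B) ` (range (\<lambda>a. (+) a ` L) \<times> range (\<lambda>a. (+) a ` K))"
    by auto
  moreover have "finite ((\<lambda>(A, B). A \<inter> B) ` (range (\<lambda>a. (+) a ` L) \<times> range (\<lambda>a. (+) a ` K)))"
    using assms by (blast intro: finite_lattice_cosets)
  ultimately have "finite (range (\<lambda>a. (+) a ` (L \<inter> K)))"
    by (rule finite_subset)
  then show ?thesis
    using assms unfolding is_lattice_def by auto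
qed

lemma is_lattice_INT:
  "finite I \<Longrightarrow> I \<noteq> {} \<Longrightarrow> (\<And>i. i \<in> I \<Longrightarrow> is_lattice (L i)) \<Longrightarrow> is_lattice (\<Inter>i\<in>I. L i)"
  by (induction I rule: finite_ne_induct) (auto intro: is_lattice_Int)

lemma lattice_coset_representatives:
  assumes "is_lattice L"
  obtains R where "finite R" "\<And>g. \<exists>r\<in>R. g - r \<in> L"
proof
  define R where "R = (\<lambda>C. SOME a. a \<in> C) ` range (\<lambda>a. (+) a ` L)"
  show "finite R"
    unfolding R_def using finite_lattice_cosets[OF assms] by blast
  show "\<exists>r\<in>R. g - r \<in> L" for g
  proof
    let ?r = "SOME a. a \<in> (+) g ` L"
    have "?r \<in> (+) g ` L"
      using is_lattice_zero[OF assms] by (intro someI) blast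
    then show "g - ?r \<in> L"
      using is_lattice_uminus[OF assms] by force
    show "?r \<in> R"
      unfolding R_def by blast
  qed
qed

lemma lattice_infinite:
  assumes "is_lattice (L :: (int ^ 'm::finite) set)"
  shows "infinite L"
proof
  assume "finite L"
  obtain R where "finite R" and R: "\<And>g. \<exists>r\<in>R. g - r \<in> L"
    using lattice_coset_representatives[OF assms] by blast
  have "UNIV = (\<Union>r\<in>R. (+) r ` L)"
    using R by (force intro: image_eqI[of _ _ "_ - _"])
  moreover have "finite (\<Union>r\<in>R. (+) r ` L)"
    using \<open>finite L\<close> \<open>finite R\<close> by blast
  moreover have "infinite (UNIV :: (int ^ 'm) set)"
    by (rule infinite_UNIV_vec) (rule infinite_UNIV_int)
  ultimately show False
    by simp
qed

lemma Union_of_cosets_if_closed: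
  fixes L C :: "'a::monoid_add set"
  assumes "0 \<in> L" "\<And>c l. c \<in> C \<Longrightarrow> l \<in> L \<Longrightarrow> c + l \<in> C"
  shows "C \<in> Union ` Pow (range (\<lambda>a. (+) a ` L))"
proof
  show "C = \<Union>((\<lambda>c. (+) c ` L) ` C)"
  proof
    have "c \<in> (+) c ` L" for c
      using assms(1) by (metis add.right_neutral imageI)
    then show "C \<subseteq> \<Union>((\<lambda>c. (+) c ` L) ` C)"
      by blast
    show "\<Union>((\<lambda>c. (+) c ` L) ` C) \<subseteq> C"
      using assms(2) by blast
  qed
qed blast

lemma is_lattice_if_supergroup:
  assumes "is_lattice L" "L \<subseteq> K" "\<And>x y. x \<in> K \<Longrightarrow> y \<in> K \<Longrightarrow> x - y \<in> K"
  shows "is_lattice K"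
proof -
  have zero: "0 \<in> K"
    using is_lattice_zero[OF assms(1)] assms(2) by blast
  have add: "x + y \<in> K" if "x \<in> K" "y \<in> K" for x y
    using assms(3)[OF that(1) assms(3)[OF zero that(2)]] by simp
  have "(+) a ` K \<in> Union ` Pow (range (\<lambda>a. (+) a ` L))" for a
  proof (rule Union_of_cosets_if_closed)
    show "0 \<in> L"
      using is_lattice_zero[OF assms(1)] .
    show "c + l \<in> (+) a ` K" if "c \<in> (+) a ` K" "l \<in> L" for c l
      using that assms(2) add by (auto simp: add.assoc)
  qed
  then have "range (\<lambda>a. (+) a ` K) \<subseteq> Union ` Pow (range (\<lambda>a. (+) a ` L))"
    by blast
  then have "finite (range (\<lambda>a. (+) a ` K))"
    using finite_lattice_cosets[OF assms(1)] by (meson finite_Pow_iff finite_imageI finite_subset)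
  then show ?thesis
    using assms(3) zero unfolding is_lattice_def by blast
qed

lemma subset_set_plus_if_zero: "0 \<in> K \<Longrightarrow> L \<subseteq> L + (K :: 'a::comm_monoid_add set)"
  using set_zero_plus2[of K L] by (simp add: add.commute)

lemma finite_superlattices:
  assumes "is_lattice L"
  shows "finite {K. is_lattice K \<and> L \<subseteq> K}"
proof (rule finite_subset)
  show "{K. is_lattice K \<and> L \<subseteq> K} \<subseteq> Union ` Pow (range (\<lambda>a. (+) a ` L))"
    using is_lattice_zero[OF assms] by (auto intro!: Union_of_cosets_if_closed is_lattice_add)
  show "finite (Union ` Pow (range (\<lambda>a. (+) a ` L)))"
    using finite_lattice_cosets[OF assms] by blast
qed

lemma is_lattice_set_plus:
  assumes "is_lattice L" "is_lattice K"
  shows "is_lattice (L + K)"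
proof (rule is_lattice_if_supergroup[OF assms(1)])
  show "L \<subseteq> L + K"
    using subset_set_plus_if_zero[OF is_lattice_zero[OF assms(2)]] .
  show "x - y \<in> L + K" if x: "x \<in> L + K" and y: "y \<in> L + K" for x y
  proof -
    obtain a b where "x = a + b" "a \<in> L" "b \<in> K"
      using x by (rule set_plus_elim)
    moreover obtain c d where "y = c + d" "c \<in> L" "d \<in> K"
      using y by (rule set_plus_elim)
    ultimately have "x - y = (a - c) + (b - d)" "a - c \<in> L" "b - d \<in> K"
      using assms by (auto intro: is_lattice_diff)
    then show ?thesis
      by (auto intro: set_plus_intro)
  qed
qed

lemma coset_Union_subcosets:
  assumes "is_lattice L1" "L1 \<subseteq> L0" "is_lattice L0"
  shows "(+) k ` L0 = (\<Union>k'\<in>(+) k ` L0. (+) k' ` L1)"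
proof
  have "x \<in> (+) x ` L1" for x
    using is_lattice_zero[OF assms(1)] by (metis add.right_neutral imageI)
  then show "(+) k ` L0 \<subseteq> (\<Union>k'\<in>(+) k ` L0. (+) k' ` L1)"
    by blast
  show "(\<Union>k'\<in>(+) k ` L0. (+) k' ` L1) \<subseteq> (+) k ` L0"
  proof
    fix x assume "x \<in> (\<Union>k'\<in>(+) k ` L0. (+) k' ` L1)"
    then obtain a b where "a \<in> L0" "b \<in> L1" "x = k + a + b"
      by blast
    then have "x = k + (a + b)" "a + b \<in> L0"
      using assms(2) is_lattice_add[OF assms(3)] by (auto simp: add.assoc)
    then show "x \<in> (+) k ` L0"
      by blast
  qed
qed

section \<open>Orbit closures in \<open>{0,1}\<^bsup>\<int>\<^sup>m\<^esup>\<close>\<close>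

lemma closure_Union_finite: "finite \<C> \<Longrightarrow> closure (\<Union>\<C>) = \<Union>(closure ` \<C>)"
  by (induction rule: finite_induct) (simp_all add: closure_Un)

lemma closure_fun_discrete_iff:
  fixes S :: "('a \<Rightarrow> 'b::discrete_topology) set"
  shows "x \<in> closure S \<longleftrightarrow> (\<forall>V. finite V \<longrightarrow> (\<exists>y\<in>S. \<forall>g\<in>V. y g = x g))"
proof
  assume x: "x \<in> closure S"
  show "\<forall>V. finite V \<longrightarrow> (\<exists>y\<in>S. \<forall>g\<in>V. y g = x g)"
  proof (intro allI impI)
    fix V :: "'a set"
    assume "finite V"
    then have "open {f. \<forall>i\<in>V. f (id i) \<in> {x i}}"
      by (intro product_topology_basis') (auto simp: open_discrete)
    moreover have "x \<in> {f. \<forall>i\<in>V. f (id i) \<in> {x i}}"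
      by simp
    ultimately have "S \<inter> {f. \<forall>i\<in>V. f (id i) \<in> {x i}} \<noteq> {}"
      using x closure_iff_nhds_not_empty by blast
    then show "\<exists>y\<in>S. \<forall>g\<in>V. y g = x g"
      by auto
  qed
next
  assume agree: "\<forall>V. finite V \<longrightarrow> (\<exists>y\<in>S. \<forall>g\<in>V. y g = x g)"
  show "x \<in> closure S"
    unfolding closure_iff_nhds_not_empty
  proof (intro allI impI)
    fix A U
    assume "U \<subseteq> A" "open U" "x \<in> U"
    then have "openin (product_topology (\<lambda>i. euclidean) UNIV) U"
      by (simp add: open_fun_def)
    from product_topology_open_contains_basis[OF this \<open>x \<in> U\<close>]
    obtain X where X: "x \<in> Pi\<^sub>E UNIV X" "finite {i. X i \<noteq> topspace euclidean}" "Pi\<^sub>E UNIV X \<subseteq> U"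
      by blast
    obtain y where "y \<in> S" "\<forall>g\<in>{i. X i \<noteq> UNIV}. y g = x g"
      using agree X(2) by auto
    then have "y \<in> Pi\<^sub>E UNIV X"
      using X(1) by (auto simp: PiE_iff) (metis UNIV_I)
    then show "S \<inter> A \<noteq> {}"
      using \<open>y \<in> S\<close> X(3) \<open>U \<subseteq> A\<close> by blast
  qed
qed

lemma mem_closure_shifts_iff:
  "x \<in> closure ((\<lambda>n. shift n \<eta>) ` C) \<longleftrightarrow> (\<forall>V. finite V \<longrightarrow> (\<exists>n\<in>C. \<forall>g\<in>V. x g = \<eta> (g + n)))"
  unfolding closure_fun_discrete_iff by (simp add: shift_def eq_commute)

lemma shift_in_orbit_closure: "shift n \<eta> \<in> orbit_closure \<eta>"
  unfolding orbit_closure_def by (rule closure_subset[THEN subsetD]) (rule rangeI)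

lemma self_in_orbit_closure: "\<eta> \<in> orbit_closure \<eta>"
  using shift_in_orbit_closure[of 0 \<eta>] by (simp add: shift_def)

lemma dist_fun_ge_term:
  fixes f h :: "'a::countable \<Rightarrow> 'b::metric_space"
  shows "(1/2) ^ to_nat g * min (dist (f g) (h g)) 1 \<le> dist f h"
proof -
  let ?term = "\<lambda>n. (1/2) ^ n * min (dist (f (from_nat n)) (h (from_nat n))) 1"
  have "summable ?term"
    by (rule summable_comparison_test'[of "\<lambda>n. (1/2) ^ n"]) (auto simp: summable_geometric_iff)
  then have "(\<Sum>n\<in>{to_nat g}. ?term n) \<le> (\<Sum>n. ?term n)"
    by (rule sum_le_suminf) auto
  then show ?thesis
    by (simp add: dist_fun_def)
qed

lemma dist_fun_le_if_agree:
  fixes f h :: "'a::countable \<Rightarrow> 'b::metric_space"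
  assumes "\<And>n. n \<le> N \<Longrightarrow> f (from_nat n) = h (from_nat n)"
  shows "dist f h \<le> (1/2) ^ N"
proof -
  have "{dist (f (from_nat n)) (h (from_nat n)) |n. n \<le> N} = {0}"
    using assms by force
  then show ?thesis
    using dist_fun_le_dist_first_terms[of f h N] by simp
qed

lemma Liminf_eq_0_if_frequently_le:
  fixes f :: "'a \<Rightarrow> real"
  assumes nonneg: "\<And>x. 0 \<le> f x" and freq: "\<And>e. 0 < e \<Longrightarrow> frequently (\<lambda>x. f x \<le> e) F"
  shows "Liminf F (\<lambda>x. ereal (f x)) = 0"
proof (rule antisym)
  show "Liminf F (\<lambda>x. ereal (f x)) \<le> 0"
  proof (rule ccontr)
    assume "\<not> ?thesis"
    then obtain e where "0 < e" "ereal e < Liminf F (\<lambda>x. ereal (f x))"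
      by (metis ereal_dense2 ereal_less(2) not_le order_less_le_trans)
    then have "eventually (\<lambda>x. e < f x) F"
      by (auto dest: less_LiminfD)
    with freq[OF \<open>0 < e\<close>] have "frequently (\<lambda>x. e < f x \<and> f x \<le> e) F"
      by (rule frequently_eventually_conj)
    then have "frequently (\<lambda>_. False) F"
      by (rule frequently_elim1) linarith
    then show False
      by simp
  qed
  show "0 \<le> Liminf F (\<lambda>x. ereal (f x))"
    using nonneg by (intro Liminf_bounded) auto
qed

section \<open>Unions of lattices meeting every lattice coset\<close>

definition meets_all_lattice_cosets :: "(int ^ 'm::finite) set \<Rightarrow> bool" where
  "meets_all_lattice_cosets A \<longleftrightarrow> (\<forall>n L. is_lattice L \<longrightarrow> (+) n ` L \<inter> A \<noteq> {})"

lemma meets_all_lattice_cosets_iff_no_coset_in_Compl: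
  fixes A :: "(int ^ 'm::finite) set"
  shows "meets_all_lattice_cosets A \<longleftrightarrow> (\<forall>n L. is_lattice L \<longrightarrow> \<not> (+) n ` L \<subseteq> UNIV - A)"
proof -
  have "\<not> X \<subseteq> UNIV - Y \<longleftrightarrow> X \<inter> Y \<noteq> {}" for X Y :: "(int ^ 'm) set"
    by blast
  then show ?thesis
    unfolding meets_all_lattice_cosets_def by (simp only:)
qed

lemma meets_all_lattice_cosets_mono:
  "meets_all_lattice_cosets A \<Longrightarrow> A \<subseteq> A' \<Longrightarrow> meets_all_lattice_cosets A'"
  unfolding meets_all_lattice_cosets_def by blast

lemma translate_finite_set_into_Union:
  assumes lat: "\<forall>L\<in>B. is_lattice L" and meets: "meets_all_lattice_cosets (\<Union>B)"
    and "finite V" and L0: "is_lattice L0"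
  shows "\<exists>s L1. is_lattice L1 \<and> L1 \<subseteq> L0 \<and> s - c \<in> L0 \<and> (\<forall>l\<in>L1. \<forall>v\<in>V. v + s + l \<in> \<Union>B)"
  using \<open>finite V\<close>
proof (induction V rule: finite_induct)
  case empty
  show ?case
    using L0 is_lattice_zero[OF L0] by (intro exI[of _ c] exI[of _ L0]) auto
next
  case (insert w V)
  then obtain s L1 where L1: "is_lattice L1" "L1 \<subseteq> L0" and "s - c \<in> L0"
    and V: "\<forall>l\<in>L1. \<forall>v\<in>V. v + s + l \<in> \<Union>B"
    by blast
  have "(+) (w + s) ` L1 \<inter> \<Union>B \<noteq> {}"
    using meets L1(1) unfolding meets_all_lattice_cosets_def by blast
  then obtain l \<Lambda> where "l \<in> L1" "\<Lambda> \<in> B" and w: "w + s + l \<in> \<Lambda>"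
    by blast
  have \<Lambda>: "is_lattice \<Lambda>"
    using lat \<open>\<Lambda> \<in> B\<close> by blast
  show ?case
  proof (intro exI conjI ballI)
    show "is_lattice (L1 \<inter> \<Lambda>)" "L1 \<inter> \<Lambda> \<subseteq> L0"
      using is_lattice_Int[OF L1(1) \<Lambda>] L1(2) by auto
    show "s + l - c \<in> L0"
      using is_lattice_add[OF L0 \<open>s - c \<in> L0\<close>, of l] \<open>l \<in> L1\<close> L1(2) by (auto simp: diff_add_eq)
  next
    fix l' v
    assume "l' \<in> L1 \<inter> \<Lambda>" "v \<in> insert w V"
    then consider "v = w" | "v \<in> V"
      by blast
    then show "v + (s + l) + l' \<in> \<Union>B"
    proof cases
      case 1
      have "w + s + l + l' \<in> \<Lambda>"
        using is_lattice_add[OF \<Lambda> w] \<open>l' \<in> L1 \<inter> \<Lambda>\<close> by blast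
      then have "v + (s + l) + l' \<in> \<Lambda>"
        using 1 by (simp add: add.assoc)
      then show ?thesis
        using \<open>\<Lambda> \<in> B\<close> by blast
    next
      case 2
      have "l + l' \<in> L1"
        using is_lattice_add[OF L1(1) \<open>l \<in> L1\<close>] \<open>l' \<in> L1 \<inter> \<Lambda>\<close> by blast
      then have "v + s + (l + l') \<in> \<Union>B"
        using V 2 by blast
      then show ?thesis
        by (simp add: add.assoc)
    qed
  qed
qed

lemma closure_shifts_coset_refine:
  assumes x: "x \<in> closure ((\<lambda>n. shift n \<eta>) ` ((+) k ` L0))"
    and "is_lattice L0" "is_lattice L1" "L1 \<subseteq> L0"
  shows "\<exists>k'. k' - k \<in> L0 \<and> x \<in> closure ((\<lambda>n. shift n \<eta>) ` ((+) k' ` L1))"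
proof -
  define \<C> where "\<C> = (\<lambda>k'. (\<lambda>n. shift n \<eta>) ` ((+) k' ` L1)) ` ((+) k ` L0)"
  have eq: "(\<lambda>n. shift n \<eta>) ` ((+) k ` L0) = \<Union>\<C>"
    unfolding \<C>_def by (subst coset_Union_subcosets[OF assms(3,4,2)]) blast
  have "\<C> \<subseteq> (\<lambda>C. (\<lambda>n. shift n \<eta>) ` C) ` range (\<lambda>a. (+) a ` L1)"
    unfolding \<C>_def by blast
  then have "finite \<C>"
    using finite_lattice_cosets[OF assms(3)] by (meson finite_imageI finite_subset)
  moreover from x have "x \<in> closure (\<Union>\<C>)"
    unfolding eq .
  ultimately have "x \<in> \<Union>(closure ` \<C>)"
    by (simp add: closure_Union_finite)
  then obtain k' where "k' \<in> (+) k ` L0" "x \<in> closure ((\<lambda>n. shift n \<eta>) ` ((+) k' ` L1))"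
    unfolding \<C>_def by blast
  moreover from \<open>k' \<in> (+) k ` L0\<close> have "k' - k \<in> L0"
    by auto
  ultimately show ?thesis
    by blast
qed

lemma orbit_closure_vanishes_on_translated_sublattice:
  assumes lat: "\<forall>L\<in>B. is_lattice L" and meets: "meets_all_lattice_cosets (\<Union>B)"
    and \<eta>: "\<And>g. g \<in> \<Union>B \<Longrightarrow> \<eta> g = 0" and x: "x \<in> orbit_closure \<eta>"
    and V: "finite V" and L0: "is_lattice L0"
  shows "\<exists>c' L'. is_lattice L' \<and> L' \<subseteq> L0 \<and> c' - c \<in> L0 \<and> (\<forall>l\<in>L'. \<forall>v\<in>V. x (v + c' + l) = 0)"
proof -
  have "x \<in> closure ((\<lambda>n. shift n \<eta>) ` ((+) 0 ` UNIV))"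
    using x by (simp add: orbit_closure_def)
  then obtain k0 where "x \<in> closure ((\<lambda>n. shift n \<eta>) ` ((+) k0 ` L0))"
    using closure_shifts_coset_refine[OF _ is_lattice_UNIV L0] by blast
  moreover obtain s L1 where L1: "is_lattice L1" "L1 \<subseteq> L0" and "s - (c + k0) \<in> L0"
    and into: "\<forall>l\<in>L1. \<forall>v\<in>V. v + s + l \<in> \<Union>B"
    using translate_finite_set_into_Union[OF lat meets V L0] by blast
  ultimately obtain k1 where "k1 - k0 \<in> L0" and k1: "x \<in> closure ((\<lambda>n. shift n \<eta>) ` ((+) k1 ` L1))"
    using closure_shifts_coset_refine[OF _ L0 L1] by blast
  txt \<open>Every shift \<open>n \<in> k1 + L1\<close> of \<open>\<eta>\<close> vanishes on \<open>V + (s - k1) + L1\<close>, hence so does \<open>x\<close>.\<close>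
  show ?thesis
  proof (intro exI conjI ballI)
    show "is_lattice L1" "L1 \<subseteq> L0"
      by (fact L1)+
    have "s - k1 - c = (s - (c + k0)) - (k1 - k0)"
      by simp
    then show "s - k1 - c \<in> L0"
      using is_lattice_diff[OF L0 \<open>s - (c + k0) \<in> L0\<close> \<open>k1 - k0 \<in> L0\<close>] by (simp only:)
  next
    fix l v
    assume "l \<in> L1" "v \<in> V"
    obtain l' where "l' \<in> L1" and "x (v + (s - k1) + l) = \<eta> (v + (s - k1) + l + (k1 + l'))"
      using k1[unfolded mem_closure_shifts_iff, rule_format, of "{v + (s - k1) + l}"] by auto
    moreover have "v + (s - k1) + l + (k1 + l') = v + s + (l + l')"
      by (simp add: algebra_simps)
    moreover have "v + s + (l + l') \<in> \<Union>B"
      using into is_lattice_add[OF L1(1) \<open>l \<in> L1\<close> \<open>l' \<in> L1\<close>] \<open>v \<in> V\<close> by blast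
    ultimately show "x (v + (s - k1) + l) = 0"
      using \<eta> by simp
  qed
qed

lemma zero_in_orbit_closure_if_meets_all_lattice_cosets:
  fixes B :: "(int ^ 'm::finite) set set"
  assumes lat: "\<forall>L\<in>B. is_lattice L" and meets: "meets_all_lattice_cosets (\<Union>B)"
  shows "(\<lambda>_. 0) \<in> orbit_closure (indicator (- \<Union>B))"
  unfolding orbit_closure_def mem_closure_shifts_iff
proof (intro allI impI)
  fix V :: "(int ^ 'm) set"
  assume "finite V"
  then obtain s L1 where "is_lattice L1" "\<forall>l\<in>L1. \<forall>v\<in>V. v + s + l \<in> \<Union>B"
    using translate_finite_set_into_Union[OF lat meets _ is_lattice_UNIV, of V 0] by blast
  then have "\<forall>g\<in>V. g + s \<in> \<Union>B"
    using is_lattice_zero by fastforce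
  then show "\<exists>n\<in>UNIV. \<forall>g\<in>V. 0 = indicator (- \<Union>B) (g + n)"
    by (auto simp: indicator_def)
qed

lemma meets_all_lattice_cosets_if_zero_in_orbit_closure:
  fixes A :: "(int ^ 'm::finite) set"
  assumes zero: "(\<lambda>_. 0) \<in> orbit_closure (indicator (- A))"
  shows "meets_all_lattice_cosets A"
  unfolding meets_all_lattice_cosets_def
proof (intro allI impI)
  fix n and L :: "(int ^ 'm) set"
  assume L: "is_lattice L"
  obtain R where "finite R" and R: "\<And>g. \<exists>r\<in>R. g - r \<in> L"
    using lattice_coset_representatives[OF L] by blast
  then obtain m where m: "\<forall>g\<in>R. (0::int) = indicator (- A) (g + m)"
    using zero unfolding orbit_closure_def mem_closure_shifts_iff by blast
  obtain r where "r \<in> R" "(n - m) - r \<in> L"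
    using R by blast
  then have "r + m \<in> (+) n ` L"
    using is_lattice_uminus[OF L] by (force simp: algebra_simps)
  moreover have "r + m \<in> A"
    using m \<open>r \<in> R\<close> by (auto simp: indicator_def)
  ultimately show "(+) n ` L \<inter> A \<noteq> {}"
    by blast
qed

lemma meets_all_lattice_cosets_if_proximal:
  fixes B :: "(int ^ 'm::finite) set set"
  assumes lat: "\<forall>L\<in>B. is_lattice L" and "B \<noteq> {}"
    and prox: "proximal (orbit_closure (indicator (- \<Union>B)))"
  shows "meets_all_lattice_cosets (\<Union>B)"
proof (rule ccontr)
  let ?\<eta> = "indicator (- \<Union>B) :: int ^ 'm \<Rightarrow> int"
  assume "\<not> ?thesis"
  then obtain n L where L: "is_lattice L" and avoid: "(+) n ` L \<inter> \<Union>B = {}"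
    unfolding meets_all_lattice_cosets_def by blast
  obtain \<Lambda> where "\<Lambda> \<in> B"
    using \<open>B \<noteq> {}\<close> by blast
  then have K: "is_lattice (L \<inter> \<Lambda>)"
    using is_lattice_Int[OF L] lat by blast
  obtain R where "finite R" and R: "\<And>g. \<exists>r\<in>R. g - r \<in> L \<inter> \<Lambda>"
    using lattice_coset_representatives[OF K] by blast
  txt \<open>Every translate of \<open>R\<close> contains a point of \<open>L \<inter> \<Lambda>\<close>, where \<open>\<eta>\<close> is 0 and its \<open>n\<close>-shift is 1.\<close>
  define d :: real where "d = (1/2) ^ Max (to_nat ` R)"
  let ?dist = "\<lambda>s. dist (\<lambda>z. real_of_int (shift s ?\<eta> z)) (\<lambda>z. real_of_int (shift s (shift n ?\<eta>) z))"
  have "d \<le> ?dist s" for s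
  proof -
    obtain r where "r \<in> R" "- s - r \<in> L \<inter> \<Lambda>"
      using R by blast
    moreover have "r + s = - (- s - r)"
      by simp
    ultimately have "r + s \<in> L \<inter> \<Lambda>"
      using is_lattice_uminus[OF K] by metis
    then have "r + s \<in> \<Union>B" "r + s + n \<in> (+) n ` L"
      using \<open>\<Lambda> \<in> B\<close> by (auto simp: add.commute)
    then have "shift s ?\<eta> r = 0" "shift s (shift n ?\<eta>) r = 1"
      using avoid by (auto simp: shift_def indicator_def)
    then have "(1/2) ^ to_nat r \<le> ?dist s"
      using dist_fun_ge_term[where g = r and f = "\<lambda>z. real_of_int (shift s ?\<eta> z)"
          and h = "\<lambda>z. real_of_int (shift s (shift n ?\<eta>) z)"] by simp
    moreover have "d \<le> (1/2) ^ to_nat r"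
      unfolding d_def using \<open>finite R\<close> \<open>r \<in> R\<close> by (intro power_decreasing) auto
    ultimately show ?thesis
      by linarith
  qed
  then have "ereal d \<le> Liminf cofinite (\<lambda>s. ereal (?dist s))"
    by (intro Liminf_bounded) auto
  moreover have "Liminf cofinite (\<lambda>s. ereal (?dist s)) = 0"
    using prox self_in_orbit_closure shift_in_orbit_closure unfolding proximal_def by blast
  moreover have "0 < d"
    unfolding d_def by simp
  ultimately show False
    by simp
qed

lemma proximal_if_meets_all_lattice_cosets:
  fixes B :: "(int ^ 'm::finite) set set"
  assumes lat: "\<forall>L\<in>B. is_lattice L" and meets: "meets_all_lattice_cosets (\<Union>B)"
  shows "proximal (orbit_closure (indicator (- \<Union>B)))"
  unfolding proximal_def
proof (intro ballI)
  let ?\<eta> = "indicator (- \<Union>B) :: int ^ 'm \<Rightarrow> int"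
  have \<eta>: "?\<eta> g = 0" if "g \<in> \<Union>B" for g
    using that by simp
  fix x y
  assume x: "x \<in> orbit_closure ?\<eta>" and y: "y \<in> orbit_closure ?\<eta>"
  let ?dist = "\<lambda>s. dist (\<lambda>z. real_of_int (shift s x z)) (\<lambda>z. real_of_int (shift s y z))"
  show "Liminf cofinite (\<lambda>s. ereal (?dist s)) = 0"
  proof (rule Liminf_eq_0_if_frequently_le)
    fix e :: real
    assume "0 < e"
    then obtain N where "(1/2) ^ N < e"
      using real_arch_pow_inv[of e "1/2"] by auto
    define V where "V = (from_nat ` {..N} :: (int ^ 'm) set)"
    have "finite V"
      unfolding V_def by simp
    obtain c1 L1 where L1: "is_lattice L1" and x0: "\<forall>l\<in>L1. \<forall>v\<in>V. x (v + c1 + l) = 0"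
      using orbit_closure_vanishes_on_translated_sublattice[OF lat meets \<eta> x \<open>finite V\<close> is_lattice_UNIV]
      by blast
    obtain c2 L2 where L2: "is_lattice L2" "L2 \<subseteq> L1" "c2 - c1 \<in> L1"
      and y0: "\<forall>l\<in>L2. \<forall>v\<in>V. y (v + c2 + l) = 0"
      using orbit_closure_vanishes_on_translated_sublattice[OF lat meets \<eta> y \<open>finite V\<close> L1]
      by blast
    have "?dist s \<le> e" if s: "s \<in> (+) c2 ` L2" for s
    proof -
      obtain l where "l \<in> L2" "s = c2 + l"
        using s by blast
      have "shift s x v = 0" "shift s y v = 0" if "v \<in> V" for v
      proof -
        have "(c2 - c1) + l \<in> L1"
          using is_lattice_add[OF L1 \<open>c2 - c1 \<in> L1\<close>] \<open>l \<in> L2\<close> L2(2) by blast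
        then have "x (v + c1 + ((c2 - c1) + l)) = 0"
          using x0 that by blast
        moreover have "v + c1 + ((c2 - c1) + l) = v + s"
          using \<open>s = c2 + l\<close> by (simp add: algebra_simps)
        ultimately show "shift s x v = 0"
          unfolding shift_def by simp
        have "y (v + c2 + l) = 0"
          using y0 that \<open>l \<in> L2\<close> by blast
        then show "shift s y v = 0"
          unfolding shift_def \<open>s = c2 + l\<close> by (simp add: add.assoc)
      qed
      then have "?dist s \<le> (1/2) ^ N"
        by (intro dist_fun_le_if_agree) (simp add: V_def)
      then show ?thesis
        using \<open>(1/2) ^ N < e\<close> by linarith
    qed
    then have "(+) c2 ` L2 \<subseteq> {s. ?dist s \<le> e}"
      by blast
    moreover have "infinite ((+) c2 ` L2)"
      using lattice_infinite[OF L2(1)] by (simp add: finite_image_iff)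
    ultimately show "frequently (\<lambda>s. ?dist s \<le> e) cofinite"
      unfolding frequently_cofinite by (rule infinite_super)
  qed simp
qed

lemma meets_all_lattice_cosets_imp_not_subset_UN:
  fixes A :: "(int ^ 'm::finite) set" and L :: "'i \<Rightarrow> (int ^ 'm) set"
  assumes meets: "meets_all_lattice_cosets A" and "finite I" "I \<noteq> {}"
    and lat: "\<forall>i\<in>I. is_lattice (L i)" and "(\<Union>i\<in>I. L i) \<noteq> UNIV"
  shows "\<not> A \<subseteq> (\<Union>i\<in>I. L i)"
proof
  assume sub: "A \<subseteq> (\<Union>i\<in>I. L i)"
  obtain n where n: "n \<notin> (\<Union>i\<in>I. L i)"
    using \<open>(\<Union>i\<in>I. L i) \<noteq> UNIV\<close> by blast
  have K: "is_lattice (\<Inter>i\<in>I. L i)"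
    using is_lattice_INT[OF \<open>finite I\<close> \<open>I \<noteq> {}\<close>] lat by blast
  have "(+) n ` (\<Inter>i\<in>I. L i) \<inter> (\<Union>i\<in>I. L i) = {}"
  proof (intro equalityI subsetI)
    fix z
    assume "z \<in> (+) n ` (\<Inter>i\<in>I. L i) \<inter> (\<Union>i\<in>I. L i)"
    then obtain l i where "i \<in> I" "l \<in> L i" "n + l \<in> L i"
      by blast
    then have "n + l - l \<in> L i"
      using lat is_lattice_diff by blast
    then show "z \<in> {}"
      using n \<open>i \<in> I\<close> by simp
  qed simp
  then show False
    using meets K sub unfolding meets_all_lattice_cosets_def by blast
qed

lemma indexed_lattice_cover_if_coset_avoids_Union:
  fixes B :: "(int ^ 'm::finite) set set"
  assumes lat: "\<forall>\<Lambda>\<in>B. is_lattice \<Lambda>" and "B \<noteq> {}" and L: "is_lattice L"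
    and avoid: "(+) n ` L \<inter> \<Union>B = {}"
  shows "\<exists>k\<ge>1. \<exists>Ls :: nat \<Rightarrow> (int ^ 'm) set. (\<forall>j\<in>{1..k}. is_lattice (Ls j))
      \<and> (\<Union>j\<in>{1..k}. Ls j) \<noteq> UNIV \<and> \<Union>B \<subseteq> (\<Union>j\<in>{1..k}. Ls j)"
proof -
  define \<L> where "\<L> = (\<lambda>\<Lambda>. L + \<Lambda>) ` B"
  have lat\<L>: "\<forall>K\<in>\<L>. is_lattice K"
    unfolding \<L>_def using lat is_lattice_set_plus[OF L] by blast
  have "L \<subseteq> L + \<Lambda>" if "\<Lambda> \<in> B" for \<Lambda>
    using subset_set_plus_if_zero is_lattice_zero lat that by blast
  then have "\<L> \<subseteq> {K. is_lattice K \<and> L \<subseteq> K}"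
    using lat\<L> unfolding \<L>_def by blast
  then have "finite \<L>"
    using finite_superlattices[OF L] by (rule finite_subset)
  moreover have "\<L> \<noteq> {}"
    unfolding \<L>_def using \<open>B \<noteq> {}\<close> by blast
  ultimately have "card \<L> \<ge> 1"
    by (simp add: Suc_le_eq card_gt_0_iff)
  obtain h where "bij_betw h {1..card \<L>} \<L>"
    using ex_bij_betw_nat_finite_1[OF \<open>finite \<L>\<close>] by blast
  then have h: "h ` {1..card \<L>} = \<L>"
    by (rule bij_betw_imp_surj_on)
  have "\<Union>B \<subseteq> \<Union>\<L>"
    unfolding \<L>_def using set_zero_plus2[OF is_lattice_zero[OF L]] by blast
  moreover have "n \<notin> \<Union>\<L>"
  proof
    assume "n \<in> \<Union>\<L>"
    then obtain \<Lambda> l m where "\<Lambda> \<in> B" "l \<in> L" "m \<in> \<Lambda>" "n = l + m"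
      unfolding \<L>_def by (auto elim!: set_plus_elim)
    then have "m = n + - l" "- l \<in> L"
      using is_lattice_uminus[OF L] by auto
    then have "m \<in> (+) n ` L \<inter> \<Union>B"
      using \<open>\<Lambda> \<in> B\<close> \<open>m \<in> \<Lambda>\<close> by blast
    then show False
      using avoid by blast
  qed
  ultimately show ?thesis
    using lat\<L> h \<open>card \<L> \<ge> 1\<close> by (intro exI[of _ "card \<L>"] exI[of _ h] conjI) auto
qed

lemma meets_all_lattice_cosets_if_coprime_family:
  fixes C :: "(int ^ 'm::finite) set set"
  assumes lat: "\<forall>\<Lambda>\<in>C. is_lattice \<Lambda>" and "infinite C"
    and coprime: "\<forall>\<Lambda>\<in>C. \<forall>\<Lambda>'\<in>C. \<Lambda> \<noteq> \<Lambda>' \<longrightarrow> coprime_subgroups \<Lambda> \<Lambda>'"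
  shows "meets_all_lattice_cosets (\<Union>C)"
  unfolding meets_all_lattice_cosets_def
proof (intro allI impI)
  fix n and L :: "(int ^ 'm) set"
  assume L: "is_lattice L"
  have "(\<lambda>\<Lambda>. L + \<Lambda>) ` C \<subseteq> {K. is_lattice K \<and> L \<subseteq> K}"
    using lat is_lattice_set_plus[OF L] subset_set_plus_if_zero is_lattice_zero by blast
  then have "finite ((\<lambda>\<Lambda>. L + \<Lambda>) ` C)"
    using finite_superlattices[OF L] by (rule finite_subset)
  then have "\<not> inj_on (\<lambda>\<Lambda>. L + \<Lambda>) C"
    using \<open>infinite C\<close> finite_imageD by blast
  then obtain \<Lambda> \<Lambda>' where "\<Lambda> \<in> C" "\<Lambda>' \<in> C" "\<Lambda> \<noteq> \<Lambda>'" and same: "L + \<Lambda> = L + \<Lambda>'"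
    unfolding inj_on_def by blast
  then obtain a b where "a \<in> \<Lambda>" "b \<in> \<Lambda>'" "n = a + b"
    using coprime unfolding coprime_subgroups_def by blast
  moreover have "b \<in> L + \<Lambda>"
    using same set_zero_plus2[OF is_lattice_zero[OF L]] \<open>b \<in> \<Lambda>'\<close> by blast
  then obtain l a' where "l \<in> L" "a' \<in> \<Lambda>" "b = l + a'"
    by (auto elim!: set_plus_elim)
  ultimately have "a + a' \<in> (+) n ` L" "a + a' \<in> \<Lambda>"
    using is_lattice_uminus[OF L] is_lattice_add lat \<open>\<Lambda> \<in> C\<close>
    by (force intro: image_eqI[of _ _ "- l"])+
  then show "(+) n ` L \<inter> \<Union>C \<noteq> {}"
    using \<open>\<Lambda> \<in> C\<close> by blast
qed

lemma meets_all_lattice_cosets_if_coprime_subfamily: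
  fixes B :: "(int ^ 'm::finite) set set"
  assumes "\<forall>\<Lambda>\<in>B. is_lattice \<Lambda>"
    and "\<exists>C\<subseteq>B. infinite C \<and> (\<forall>\<Lambda>\<in>C. \<forall>\<Lambda>'\<in>C. \<Lambda> \<noteq> \<Lambda>' \<longrightarrow> coprime_subgroups \<Lambda> \<Lambda>')"
  shows "meets_all_lattice_cosets (\<Union>B)"
proof -
  obtain C where "C \<subseteq> B" "infinite C" "\<forall>\<Lambda>\<in>C. \<forall>\<Lambda>'\<in>C. \<Lambda> \<noteq> \<Lambda>' \<longrightarrow> coprime_subgroups \<Lambda> \<Lambda>'"
    using assms(2) by blast
  then have "meets_all_lattice_cosets (\<Union>C)"
    using assms(1) by (intro meets_all_lattice_cosets_if_coprime_family) auto
  then show ?thesis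
    by (rule meets_all_lattice_cosets_mono) (use \<open>C \<subseteq> B\<close> in blast)
qed

section \<open>Upper Banach density\<close>

lemma upper_banach_density_mono:
  fixes A A' :: "(int ^ 'm::finite) set"
  assumes "A \<subseteq> A'"
  shows "upper_banach_density A \<le> upper_banach_density A'"
  unfolding upper_banach_density_def
proof (rule SUP_subset_mono[OF subset_refl])
  fix F :: "nat \<Rightarrow> (int ^ 'm) set"
  assume "F \<in> {F. folner F}"
  then have "card (A \<inter> F k) \<le> card (A' \<inter> F k)" for k
    using assms unfolding folner_def by (intro card_mono) auto
  then show "limsup (\<lambda>k. ereal (real (card (A \<inter> F k)) / real (card (F k))))
      \<le> limsup (\<lambda>k. ereal (real (card (A' \<inter> F k)) / real (card (F k))))"
    by (intro Limsup_mono always_eventually allI) (simp add: divide_right_mono)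
qed

lemma card_Int_le_translate:
  fixes G C D :: "'a::group_add set"
  assumes "finite G" and "(\<lambda>x. x + t) ` D \<subseteq> C"
  shows "real (card (G \<inter> D)) \<le> real (card (G \<inter> C)) + real (card G) - real (card ((\<lambda>x. x + t) ` G \<inter> G))"
proof -
  let ?T = "(\<lambda>x. x + t) ` G"
  have inj: "inj_on (\<lambda>x. x + t) X" for X :: "'a set"
    by (simp add: inj_on_def)
  have "card (G \<inter> D) = card ((\<lambda>x. x + t) ` (G \<inter> D))"
    using inj by (simp add: card_image)
  also have "\<dots> \<le> card ((G \<inter> C) \<union> (?T - G))"
    using assms by (intro card_mono) auto
  also have "\<dots> \<le> card (G \<inter> C) + card (?T - G)"
    by (rule card_Un_le)
  finally have "real (card (G \<inter> D)) \<le> real (card (G \<inter> C)) + real (card (?T - G))"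
    by linarith
  moreover have "card ?T = card (?T \<inter> G) + card (?T - G)"
    using assms(1) by (intro card_Int_Diff) simp
  moreover have "card ?T = card G"
    using inj by (simp add: card_image)
  ultimately show ?thesis
    by linarith
qed

text \<open>
  Translation by \<open>n - r\<close> moves the coset \<open>r + L\<close> onto \<open>n + L\<close>; if \<open>G\<close> is almost invariant under
  these translations, no coset of \<open>L\<close> takes much more of \<open>G\<close> than \<open>n + L\<close> does.
\<close>

lemma card_Int_coset_ge:
  fixes L G :: "'a::ab_group_add set"
  assumes "finite R" and R: "\<And>g. \<exists>r\<in>R. g - r \<in> L" and "finite G"
    and overlap: "\<And>r. r \<in> R \<Longrightarrow>
      (1 - 1 / (2 * real (card R))) * real (card G) \<le> real (card ((\<lambda>x. x + (n - r)) ` G \<inter> G))"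
  shows "real (card G) / (2 * real (card R)) \<le> real (card (G \<inter> (+) n ` L))"
proof -
  let ?N = "real (card G)" and ?c = "real (card (G \<inter> (+) n ` L))" and ?p = "real (card R)"
  have "R \<noteq> {}"
    using R by blast
  then have "?p > 0"
    using \<open>finite R\<close> by (simp add: card_gt_0_iff)
  have coset: "real (card (G \<inter> (+) r ` L)) \<le> ?c + ?N / (2 * ?p)" if "r \<in> R" for r
  proof -
    have "(\<lambda>x. x + (n - r)) ` (+) r ` L \<subseteq> (+) n ` L"
      by (auto simp: algebra_simps)
    then have "real (card (G \<inter> (+) r ` L)) \<le> ?c + ?N - card ((\<lambda>x. x + (n - r)) ` G \<inter> G)"
      by (rule card_Int_le_translate[OF \<open>finite G\<close>])
    moreover have "(1 - 1 / (2 * ?p)) * ?N = ?N - ?N / (2 * ?p)"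
      by (simp add: algebra_simps)
    ultimately show ?thesis
      using overlap[OF that] by linarith
  qed
  have "G \<subseteq> (\<Union>r\<in>R. G \<inter> (+) r ` L)"
  proof
    fix g
    assume "g \<in> G"
    obtain r where "r \<in> R" "g - r \<in> L"
      using R by blast
    then have "g \<in> (+) r ` L"
      by (metis add.commute diff_add_cancel imageI)
    then show "g \<in> (\<Union>r\<in>R. G \<inter> (+) r ` L)"
      using \<open>g \<in> G\<close> \<open>r \<in> R\<close> by blast
  qed
  then have "card G \<le> card (\<Union>r\<in>R. G \<inter> (+) r ` L)"
    using \<open>finite R\<close> \<open>finite G\<close> by (intro card_mono) auto
  also have "\<dots> \<le> (\<Sum>r\<in>R. card (G \<inter> (+) r ` L))"
    by (rule card_UN_le[OF \<open>finite R\<close>])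
  finally have "?N \<le> (\<Sum>r\<in>R. real (card (G \<inter> (+) r ` L)))"
    unfolding of_nat_sum[symmetric] by (rule of_nat_mono)
  also have "\<dots> \<le> (\<Sum>r\<in>R. ?c + ?N / (2 * ?p))"
    using coset by (rule sum_mono)
  also have "\<dots> = ?p * ?c + ?N / 2"
    using \<open>?p > 0\<close> by (simp add: field_simps)
  finally have "?N \<le> ?c * (2 * ?p)"
    by (simp add: algebra_simps)
  then show ?thesis
    using \<open>?p > 0\<close> by (simp add: pos_divide_le_eq)
qed

lemma share_of_Compl_coset_le:
  fixes L G :: "'a::ab_group_add set"
  assumes "finite R" and R: "\<And>g. \<exists>r\<in>R. g - r \<in> L" and "finite G"
    and overlap: "\<And>r. r \<in> R \<Longrightarrow>
      1 - 1 / (2 * real (card R)) < real (card ((\<lambda>x. x + (n - r)) ` G \<inter> G)) / real (card G)"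
  shows "real (card (- (+) n ` L \<inter> G)) / real (card G) \<le> 1 - 1 / (2 * real (card R))"
proof -
  let ?N = "real (card G)" and ?c = "real (card (G \<inter> (+) n ` L))" and ?p = "real (card R)"
  have "R \<noteq> {}"
    using R by blast
  then have "?p \<ge> 1"
    using \<open>finite R\<close> by (simp add: Suc_le_eq card_gt_0_iff)
  then have "0 < 1 - 1 / (2 * ?p)"
    by (simp add: field_simps)
  then have "?N > 0"
    using overlap \<open>R \<noteq> {}\<close> by (auto intro: ccontr)
  then have "(1 - 1 / (2 * ?p)) * ?N \<le> real (card ((\<lambda>x. x + (n - r)) ` G \<inter> G))" if "r \<in> R" for r
    using overlap[OF that] by (simp add: pos_less_divide_eq less_imp_le)
  then have "?N / (2 * ?p) \<le> ?c"
    by (rule card_Int_coset_ge[OF \<open>finite R\<close> R \<open>finite G\<close>])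
  moreover have "?N = ?c + real (card (- (+) n ` L \<inter> G))"
    using card_Int_Diff[OF \<open>finite G\<close>, of "(+) n ` L"] by (simp add: Diff_eq Int_commute)
  moreover have "(1 - 1 / (2 * ?p)) * ?N = ?N - ?N / (2 * ?p)"
    by (simp add: algebra_simps)
  ultimately have "real (card (- (+) n ` L \<inter> G)) \<le> (1 - 1 / (2 * ?p)) * ?N"
    by linarith
  then show ?thesis
    using \<open>?N > 0\<close> by (simp add: pos_divide_le_eq)
qed

lemma upper_banach_density_Compl_coset_lt_1:
  fixes L :: "(int ^ 'm::finite) set"
  assumes "is_lattice L"
  shows "upper_banach_density (- (+) n ` L) < 1"
proof -
  obtain R where "finite R" and R: "\<And>g. \<exists>r\<in>R. g - r \<in> L"
    using lattice_coset_representatives[OF assms] by blast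
  define p where "p = real (card R)"
  have "R \<noteq> {}"
    using R by blast
  then have "p \<ge> 1"
    unfolding p_def using \<open>finite R\<close> by (simp add: Suc_le_eq card_gt_0_iff)
  have "upper_banach_density (- (+) n ` L) \<le> ereal (1 - 1 / (2 * p))"
    unfolding upper_banach_density_def
  proof (rule SUP_least)
    fix F :: "nat \<Rightarrow> (int ^ 'm) set"
    assume "F \<in> {F. folner F}"
    then have fin: "finite (F k)"
      and lim: "(\<lambda>k. real (card ((\<lambda>x. x + g) ` F k \<inter> F k)) / real (card (F k))) \<longlonglongrightarrow> 1" for k g
      unfolding folner_def by blast+
    have "1 - 1 / (2 * p) < 1"
      using \<open>p \<ge> 1\<close> by simp
    then have "eventually (\<lambda>k. 1 - 1 / (2 * p) < real (card ((\<lambda>x. x + g) ` F k \<inter> F k)) / real (card (F k)))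
        sequentially" for g
      by (rule order_tendstoD(1)[OF lim])
    then have "eventually (\<lambda>k. \<forall>r\<in>R.
        1 - 1 / (2 * p) < real (card ((\<lambda>x. x + (n - r)) ` F k \<inter> F k)) / real (card (F k))) sequentially"
      using \<open>finite R\<close> by (simp add: eventually_ball_finite_distrib)
    then have "eventually (\<lambda>k. ereal (real (card (- (+) n ` L \<inter> F k)) / real (card (F k)))
        \<le> ereal (1 - 1 / (2 * p))) sequentially"
      unfolding p_def
    proof eventually_elim
      case (elim k)
      have "real (card (- (+) n ` L \<inter> F k)) / real (card (F k)) \<le> 1 - 1 / (2 * real (card R))"
        by (rule share_of_Compl_coset_le[OF \<open>finite R\<close> R fin]) (use elim in blast)
      then show ?case
        by simp
    qed
    then show "limsup (\<lambda>k. ereal (real (card (- (+) n ` L \<inter> F k)) / real (card (F k))))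
        \<le> ereal (1 - 1 / (2 * p))"
      by (rule Limsup_bounded)
  qed
  also have "\<dots> < 1"
    using \<open>p \<ge> 1\<close> by simp
  finally show ?thesis .
qed

lemma meets_all_lattice_cosets_if_upper_banach_density_eq_1:
  assumes "upper_banach_density A = 1"
  shows "meets_all_lattice_cosets A"
  unfolding meets_all_lattice_cosets_def
proof (intro allI impI notI)
  fix n L
  assume "is_lattice L" and "(+) n ` L \<inter> A = {}"
  then have "upper_banach_density A \<le> upper_banach_density (- (+) n ` L)"
    by (intro upper_banach_density_mono) blast
  also have "\<dots> < 1"
    using \<open>is_lattice L\<close> by (rule upper_banach_density_Compl_coset_lt_1)
  finally show False
    using assms by simp
qed

lemma vec_set_eq_image_PiE: "{x :: 'a ^ 'n::finite. \<forall>i. x $ i \<in> S i} = vec_lambda ` Pi\<^sub>E UNIV S"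
proof
  show "{x. \<forall>i. x $ i \<in> S i} \<subseteq> vec_lambda ` Pi\<^sub>E UNIV S"
  proof
    fix x :: "'a ^ 'n"
    assume "x \<in> {x. \<forall>i. x $ i \<in> S i}"
    then have "vec_nth x \<in> Pi\<^sub>E UNIV S"
      by auto
    then show "x \<in> vec_lambda ` Pi\<^sub>E UNIV S"
      by (metis image_eqI vec_nth_inverse)
  qed
qed auto

lemma card_vec_set:
  assumes "\<And>i. finite (S i)"
  shows "card {x :: 'a ^ 'n::finite. \<forall>i. x $ i \<in> S i} = (\<Prod>i\<in>UNIV. card (S i))"
proof -
  have "inj_on (vec_lambda :: ('n \<Rightarrow> 'a) \<Rightarrow> 'a ^ 'n) (Pi\<^sub>E UNIV S)"
    by (auto intro!: inj_onI)
  then show ?thesis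
    unfolding vec_set_eq_image_PiE by (simp add: card_image card_PiE)
qed

definition cube :: "nat \<Rightarrow> (int ^ 'm::finite) set" where
  "cube k = {x. \<forall>i. x $ i \<in> {- int k..int k}}"

lemma finite_cube: "finite (cube k)"
  unfolding cube_def vec_set_eq_image_PiE by (intro finite_imageI finite_PiE) auto

lemma zero_in_cube: "0 \<in> cube k"
  unfolding cube_def by simp

lemma card_cube: "card (cube k :: (int ^ 'm::finite) set) = (2 * k + 1) ^ CARD('m)"
proof -
  have "card {- int k..int k} = 2 * k + 1"
    by simp
  then show ?thesis
    unfolding cube_def by (subst card_vec_set) (simp_all only: finite_atLeastAtMost_int prod_constant)
qed

lemma translate_cube_Int_cube:
  "(\<lambda>x. x + g) ` cube k \<inter> cube k = {x. \<forall>i. x $ i \<in> {g $ i - int k..g $ i + int k} \<inter> {- int k..int k}}"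
proof (intro set_eqI iffI)
  fix x
  assume "x \<in> (\<lambda>x. x + g) ` cube k \<inter> cube k"
  then obtain y where "y \<in> cube k" "x = y + g" "x \<in> cube k"
    by blast
  then show "x \<in> {x. \<forall>i. x $ i \<in> {g $ i - int k..g $ i + int k} \<inter> {- int k..int k}}"
    by (auto simp: cube_def simp del: Int_atLeastAtMost)
next
  fix x
  assume x: "x \<in> {x. \<forall>i. x $ i \<in> {g $ i - int k..g $ i + int k} \<inter> {- int k..int k}}"
  have "(x - g) $ i \<in> {- int k..int k} \<and> x $ i \<in> {- int k..int k}" for i
  proof -
    have "x $ i \<in> {g $ i - int k..g $ i + int k}" "x $ i \<in> {- int k..int k}"
      using x by (simp_all del: Int_atLeastAtMost)
    then show ?thesis
      by auto
  qed
  then have "x - g \<in> cube k" "x \<in> cube k"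
    unfolding cube_def by blast+
  then show "x \<in> (\<lambda>x. x + g) ` cube k \<inter> cube k"
    by (auto intro: image_eqI[of _ _ "x - g"])
qed

lemma card_Icc_Int_translate:
  "card ({a - int k..a + int k} \<inter> {- int k..int k}) = nat (2 * int k + 1 - \<bar>a\<bar>)"
proof (cases "a \<ge> 0")
  case True
  then have "{a - int k..a + int k} \<inter> {- int k..int k} = {a - int k..int k}"
    by auto
  then show ?thesis
    using True by simp
next
  case False
  then have "{a - int k..a + int k} \<inter> {- int k..int k} = {- int k..a + int k}"
    by auto
  then show ?thesis
    using False by simp
qed

lemma card_translate_cube_Int_cube:
  "card ((\<lambda>x. x + g) ` cube k \<inter> cube k) = (\<Prod>i\<in>UNIV. nat (2 * int k + 1 - \<bar>g $ i\<bar>))"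
  unfolding translate_cube_Int_cube
  by (subst card_vec_set) (simp_all add: card_Icc_Int_translate del: Int_atLeastAtMost)

lemma cube_overlap_factor_tendsto: "(\<lambda>k. real (nat (2 * int k + 1 - \<bar>a\<bar>)) / real (2 * k + 1)) \<longlonglongrightarrow> 1"
proof -
  have "(\<lambda>k. (2 * real k + 1 - \<bar>a\<bar>) / (2 * real k + 1)) \<longlonglongrightarrow> 1"
    by real_asymp
  moreover have "eventually (\<lambda>k. (2 * real k + 1 - \<bar>a\<bar>) / (2 * real k + 1)
      = real (nat (2 * int k + 1 - \<bar>a\<bar>)) / real (2 * k + 1)) sequentially"
    using eventually_ge_at_top[of "nat \<bar>a\<bar>"] by eventually_elim (simp add: of_nat_diff)
  ultimately show ?thesis
    by (rule Lim_transform_eventually)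
qed

lemma folner_cube: "folner (cube :: nat \<Rightarrow> (int ^ 'm::finite) set)"
  unfolding folner_def
proof (intro conjI allI)
  show "finite (cube k)" for k
    by (rule finite_cube)
  fix g :: "int ^ 'm"
  have ratio: "real (card ((\<lambda>x. x + g) ` cube k \<inter> cube k)) / real (card (cube k :: (int ^ 'm) set))
      = (\<Prod>i\<in>UNIV. real (nat (2 * int k + 1 - \<bar>g $ i\<bar>)) / real (2 * k + 1))" for k
    by (simp add: card_translate_cube_Int_cube card_cube prod_dividef)
  have "(\<lambda>k. \<Prod>i\<in>UNIV. real (nat (2 * int k + 1 - \<bar>g $ i\<bar>)) / real (2 * k + 1))
      \<longlonglongrightarrow> (\<Prod>i\<in>(UNIV :: 'm set). 1)"
    by (intro tendsto_prod cube_overlap_factor_tendsto)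
  then show "(\<lambda>k. real (card ((\<lambda>x. x + g) ` cube k \<inter> cube k)) / real (card (cube k :: (int ^ 'm) set)))
      \<longlonglongrightarrow> 1"
    unfolding ratio by simp
qed

lemma folner_translate:
  fixes F :: "nat \<Rightarrow> (int ^ 'm::finite) set"
  assumes "folner F"
  shows "folner (\<lambda>k. (\<lambda>x. x + s k) ` F k)"
  unfolding folner_def
proof (intro conjI allI)
  show "finite ((\<lambda>x. x + s k) ` F k)" for k
    using assms unfolding folner_def by blast
  fix g :: "int ^ 'm"
  have inj: "inj (\<lambda>x :: int ^ 'm. x + c)" for c
    by (simp add: inj_on_def)
  have "(\<lambda>x. x + g) ` (\<lambda>x. x + s k) ` F k \<inter> (\<lambda>x. x + s k) ` F k
      = (\<lambda>x. x + s k) ` ((\<lambda>x. x + g) ` F k \<inter> F k)" for k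
    by (simp add: image_Int[OF inj] image_image algebra_simps)
  then show "(\<lambda>k. real (card ((\<lambda>x. x + g) ` (\<lambda>x. x + s k) ` F k \<inter> (\<lambda>x. x + s k) ` F k))
      / real (card ((\<lambda>x. x + s k) ` F k))) \<longlonglongrightarrow> 1"
    using assms unfolding folner_def by (simp add: card_image inj_on_subset[OF inj])
qed

lemma upper_banach_density_le_1: "upper_banach_density (A :: (int ^ 'm::finite) set) \<le> 1"
  unfolding upper_banach_density_def
proof (rule SUP_least)
  fix F :: "nat \<Rightarrow> (int ^ 'm) set"
  assume "F \<in> {F. folner F}"
  then have "card (A \<inter> F k) \<le> card (F k)" for k
    unfolding folner_def by (simp add: card_mono)
  then have "real (card (A \<inter> F k)) / real (card (F k)) \<le> 1" for k
    by (cases "card (F k) = 0") (simp_all add: divide_le_eq_1)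
  then show "limsup (\<lambda>k. ereal (real (card (A \<inter> F k)) / real (card (F k)))) \<le> 1"
    by (intro Limsup_bounded always_eventually) simp
qed

lemma upper_banach_density_eq_1_if_folner_subset:
  assumes "folner F" and "\<And>k. F k \<noteq> {}" and "\<And>k. F k \<subseteq> A"
  shows "upper_banach_density A = 1"
proof (rule antisym[OF upper_banach_density_le_1])
  have "A \<inter> F k = F k" "card (F k) \<noteq> 0" for k
    using assms unfolding folner_def by auto
  then have "limsup (\<lambda>k. ereal (real (card (A \<inter> F k)) / real (card (F k)))) = 1"
    by (simp add: Limsup_const del: neq0_conv)
  moreover have "limsup (\<lambda>k. ereal (real (card (A \<inter> F k)) / real (card (F k))))
      \<le> upper_banach_density A"
    unfolding upper_banach_density_def by (rule SUP_upper) (simp add: assms(1))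
  ultimately show "1 \<le> upper_banach_density A"
    by simp
qed

lemma upper_banach_density_eq_1_if_zero_in_orbit_closure:
  fixes A :: "(int ^ 'm::finite) set"
  assumes zero: "(\<lambda>_. 0) \<in> orbit_closure (indicator (- A))"
  shows "upper_banach_density A = 1"
proof -
  have "\<exists>s. \<forall>g\<in>cube k. g + s \<in> A" for k
  proof -
    obtain s where "\<forall>g\<in>cube k. (0::int) = indicator (- A) (g + s)"
      using zero finite_cube unfolding orbit_closure_def mem_closure_shifts_iff by blast
    then show ?thesis
      by (auto simp: indicator_def)
  qed
  then obtain s where s: "\<And>k. \<forall>g\<in>cube k. g + s k \<in> A"
    by metis
  show ?thesis
  proof (rule upper_banach_density_eq_1_if_folner_subset)
    show "folner (\<lambda>k. (\<lambda>x. x + s k) ` cube k)"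
      by (rule folner_translate[OF folner_cube])
    show "(\<lambda>x. x + s k) ` cube k \<noteq> {}" "(\<lambda>x. x + s k) ` cube k \<subseteq> A" for k
      using zero_in_cube s by auto
  qed
qed

lemma proximal_iff_meets_all_lattice_cosets:
  fixes B :: "(int ^ 'm::finite) set set"
  assumes "\<forall>L\<in>B. is_lattice L" and "B \<noteq> {}"
  shows "proximal (orbit_closure (indicator (- \<Union>B))) \<longleftrightarrow> meets_all_lattice_cosets (\<Union>B)"
proof
  show "meets_all_lattice_cosets (\<Union>B)" if "proximal (orbit_closure (indicator (- \<Union>B)))"
    using meets_all_lattice_cosets_if_proximal[OF assms that] .
  show "proximal (orbit_closure (indicator (- \<Union>B)))" if "meets_all_lattice_cosets (\<Union>B)"
    using proximal_if_meets_all_lattice_cosets[OF assms(1) that] .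
qed

lemma zero_in_orbit_closure_iff_meets_all_lattice_cosets:
  fixes B :: "(int ^ 'm::finite) set set"
  assumes "\<forall>L\<in>B. is_lattice L"
  shows "(\<lambda>_. 0) \<in> orbit_closure (indicator (- \<Union>B)) \<longleftrightarrow> meets_all_lattice_cosets (\<Union>B)"
proof
  show "meets_all_lattice_cosets (\<Union>B)" if "(\<lambda>_. 0) \<in> orbit_closure (indicator (- \<Union>B))"
    using meets_all_lattice_cosets_if_zero_in_orbit_closure[OF that] .
  show "(\<lambda>_. 0) \<in> orbit_closure (indicator (- \<Union>B))" if "meets_all_lattice_cosets (\<Union>B)"
    using zero_in_orbit_closure_if_meets_all_lattice_cosets[OF assms that] .
qed

lemma upper_banach_density_eq_1_iff_meets_all_lattice_cosets:
  fixes B :: "(int ^ 'm::finite) set set"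
  assumes "\<forall>L\<in>B. is_lattice L"
  shows "upper_banach_density (\<Union>B) = 1 \<longleftrightarrow> meets_all_lattice_cosets (\<Union>B)"
proof
  show "meets_all_lattice_cosets (\<Union>B)" if "upper_banach_density (\<Union>B) = 1"
    using meets_all_lattice_cosets_if_upper_banach_density_eq_1[OF that] .
  show "upper_banach_density (\<Union>B) = 1" if "meets_all_lattice_cosets (\<Union>B)"
    by (rule upper_banach_density_eq_1_if_zero_in_orbit_closure[OF
          zero_in_orbit_closure_if_meets_all_lattice_cosets[OF assms that]])
qed

lemma not_subset_proper_lattice_unions_iff_meets_all_lattice_cosets:
  fixes B :: "(int ^ 'm::finite) set set"
  assumes lat: "\<forall>\<Lambda>\<in>B. is_lattice \<Lambda>" and "B \<noteq> {}"
  shows "(\<forall>k\<ge>1. \<forall>Ls :: nat \<Rightarrow> (int ^ 'm) set.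
      (\<forall>j\<in>{1..k}. is_lattice (Ls j)) \<and> (\<Union>j\<in>{1..k}. Ls j) \<noteq> UNIV \<longrightarrow> \<not> \<Union>B \<subseteq> (\<Union>j\<in>{1..k}. Ls j))
    \<longleftrightarrow> meets_all_lattice_cosets (\<Union>B)"
proof
  assume not_covered: "\<forall>k\<ge>1. \<forall>Ls :: nat \<Rightarrow> (int ^ 'm) set.
      (\<forall>j\<in>{1..k}. is_lattice (Ls j)) \<and> (\<Union>j\<in>{1..k}. Ls j) \<noteq> UNIV \<longrightarrow> \<not> \<Union>B \<subseteq> (\<Union>j\<in>{1..k}. Ls j)"
  show "meets_all_lattice_cosets (\<Union>B)"
    unfolding meets_all_lattice_cosets_def
  proof (intro allI impI notI)
    fix n L
    assume L: "is_lattice L" and avoid: "(+) n ` L \<inter> \<Union>B = {}"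
    obtain k and Ls :: "nat \<Rightarrow> (int ^ 'm) set" where "k \<ge> 1" "\<forall>j\<in>{1..k}. is_lattice (Ls j)"
      "(\<Union>j\<in>{1..k}. Ls j) \<noteq> UNIV" "\<Union>B \<subseteq> (\<Union>j\<in>{1..k}. Ls j)"
      using indexed_lattice_cover_if_coset_avoids_Union[OF lat \<open>B \<noteq> {}\<close> L avoid] by blast
    then show False
      using not_covered[rule_format, of k Ls] by blast
  qed
next
  assume meets: "meets_all_lattice_cosets (\<Union>B)"
  show "\<forall>k\<ge>1. \<forall>Ls :: nat \<Rightarrow> (int ^ 'm) set.
      (\<forall>j\<in>{1..k}. is_lattice (Ls j)) \<and> (\<Union>j\<in>{1..k}. Ls j) \<noteq> UNIV \<longrightarrow> \<not> \<Union>B \<subseteq> (\<Union>j\<in>{1..k}. Ls j)"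
  proof (intro allI impI)
    fix k :: nat and Ls :: "nat \<Rightarrow> (int ^ 'm) set"
    assume "k \<ge> 1" and "(\<forall>j\<in>{1..k}. is_lattice (Ls j)) \<and> (\<Union>j\<in>{1..k}. Ls j) \<noteq> UNIV"
    then show "\<not> \<Union>B \<subseteq> (\<Union>j\<in>{1..k}. Ls j)"
      by (intro meets_all_lattice_cosets_imp_not_subset_UN[OF meets]) auto
  qed
qed

theorem theorem5p3:
  fixes \<B> :: "(int ^ 'm::finite) set set"
  assumes "infinite \<B>"
    and "\<forall>L\<in>\<B>. proper_lattice L"
  defines "M \<equiv> \<Union>\<B>"
    and "F \<equiv> UNIV - \<Union>\<B>"
    and "\<eta> \<equiv> (\<lambda>g. if g \<in> UNIV - \<Union>\<B> then 1 else 0 :: int)"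
  shows
   "let a = proximal (orbit_closure \<eta>);
        b = (\<lambda>_. 0) \<in> orbit_closure \<eta>;
        c = (\<forall>k\<ge>1. \<forall>Ls :: nat \<Rightarrow> (int ^ 'm) set.
               (\<forall>j\<in>{1..k}. is_lattice (Ls j)) \<and> (\<Union>j\<in>{1..k}. Ls j) \<noteq> UNIV
               \<longrightarrow> \<not> M \<subseteq> (\<Union>j\<in>{1..k}. Ls j));
        d = (\<exists>C\<subseteq>\<B>. infinite C \<and>
               (\<forall>L\<in>C. \<forall>L'\<in>C. L \<noteq> L' \<longrightarrow> coprime_subgroups L L'));
        e = (\<forall>n L. is_lattice L \<longrightarrow> \<not> ((\<lambda>x. n + x) ` L \<subseteq> F));
        f = (upper_banach_density M = 1)
    in (d \<longrightarrow> a) \<and> (a \<longleftrightarrow> b) \<and> (a \<longleftrightarrow> c) \<and> (a \<longleftrightarrow> e) \<and> (a \<longleftrightarrow> f)"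
proof -
  have lat: "\<forall>L\<in>\<B>. is_lattice L"
    using assms(2) unfolding proper_lattice_def by blast
  have "\<B> \<noteq> {}"
    using assms(1) by auto
  have \<eta>_eq: "\<eta> = indicator (- M)"
    unfolding \<eta>_def M_def by (rule ext) (simp add: indicator_def)
  show ?thesis
    unfolding Let_def \<eta>_eq F_def M_def meets_all_lattice_cosets_iff_no_coset_in_Compl[symmetric]
      proximal_iff_meets_all_lattice_cosets[OF lat \<open>\<B> \<noteq> {}\<close>]
      zero_in_orbit_closure_iff_meets_all_lattice_cosets[OF lat]
      not_subset_proper_lattice_unions_iff_meets_all_lattice_cosets[OF lat \<open>\<B> \<noteq> {}\<close>]
      upper_banach_density_eq_1_iff_meets_all_lattice_cosets[OF lat]
    using meets_all_lattice_cosets_if_coprime_subfamily[OF lat] by (simp only: simp_thms) blast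
qed

end
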